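(* Let $T:[0,1)\to[0,1)$ be an interval exchange transformation and let $f:[0,1)\to\mathbb{R}$ be a function of bounded variation. Let $\{T^i\Delta:0\le i<q\}$ be a Rokhlin tower of intervals (i.e. $\Delta$ is an interval and $T^i\Delta$, $0\le i<q$, are pairwise disjoint intervals). Then there exists $a\in\mathbb{R}$ such that \[|f^{(q)}(x)-a|\le \mathrm{Var}_{[0,1)}f\quad\text{and}\quad |f^{(2q)}(x)-2a|\le 2\,\mathrm{Var}_{[0,1)}f\] for all $x\in\bigcup_{i=0}^{q-1}T^i(\Delta\cap T^{-q}\Delta\cap T^{-2q}\Delta)$.
   Context: An interval exchange transformation is a bijection of $[0,1)$ which splits $[0,1)$ into finitely many intervals and rearranges them by translations. $f^{(n)}=\sum_{i=0}^{n-1}f\circ T^i$. $\mathrm{Var}_{[0,1)}f$ is the total variation of $f$. *)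

theory Defs
  imports "HOL-Analysis.Analysis"
begin

definition iet :: "(real \<Rightarrow> real) \<Rightarrow> bool" where
  "iet T \<longleftrightarrow> bij_betw T {0..<1} {0..<1} \<and>
     (\<exists>(n::nat) (a::nat \<Rightarrow> real) (c::nat \<Rightarrow> real).
        a 0 = 0 \<and> a n = 1 \<and> (\<forall>i<n. a i < a (Suc i)) \<and>
        (\<forall>i<n. \<forall>x\<in>{a i..<a (Suc i)}. T x = x + c i))"

definition var_sums01 :: "(real \<Rightarrow> real) \<Rightarrow> real set" where
  "var_sums01 f = {\<Sum>i<n. \<bar>f (x (Suc i)) - f (x i)\<bar> | (n::nat) (x::nat \<Rightarrow> real).
      (\<forall>i\<le>n. x i \<in> {0..<1}) \<and> (\<forall>i<n. x i < x (Suc i))}"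

definition bounded_variation01 :: "(real \<Rightarrow> real) \<Rightarrow> bool" where
  "bounded_variation01 f \<longleftrightarrow> bdd_above (var_sums01 f)"

definition Var01 :: "(real \<Rightarrow> real) \<Rightarrow> real" where
  "Var01 f = Sup (var_sums01 f)"

definition birkhoff_sum :: "(real \<Rightarrow> real) \<Rightarrow> (real \<Rightarrow> real) \<Rightarrow> nat \<Rightarrow> real \<Rightarrow> real" where
  "birkhoff_sum T f n x = (\<Sum>i<n. f ((T ^^ i) x))"

definition iet_preimage :: "(real \<Rightarrow> real) \<Rightarrow> nat \<Rightarrow> real set \<Rightarrow> real set" where
  "iet_preimage T k A = {x \<in> {0..<1}. (T ^^ k) x \<in> A}"

definition rokhlin_tower :: "(real \<Rightarrow> real) \<Rightarrow> real set \<Rightarrow> nat \<Rightarrow> bool" where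
  "rokhlin_tower T D q \<longleftrightarrow> D \<subseteq> {0..<1} \<and> is_interval D \<and>
     (\<forall>i<q. is_interval ((T ^^ i) ` D)) \<and>
     (\<forall>i<q. \<forall>j<q. i \<noteq> j \<longrightarrow> (T ^^ i) ` D \<inter> (T ^^ j) ` D = {})"

end

theory Submission
  imports Defs
begin

text \<open>Every point of the union is \<open>x = T^j y\<close> with \<open>j < q\<close> and \<open>y, T^q y, T^2q y\<close> in \<open>\<Delta>\<close>.
  The orbit segment \<open>T^j y, ..., T^(j+q-1) y\<close> meets each level \<open>T^k \<Delta>\<close> of the tower exactly
  once, so two Birkhoff sums \<open>f^(q)\<close> at such points differ by at most a sum of increments
  \<open>|f z_k - f w_k|\<close> with \<open>z_k, w_k\<close> in the pairwise disjoint intervals \<open>T^k \<Delta>\<close>, which is bounded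
  by the total variation of \<open>f\<close>. Take \<open>a\<close> to be \<open>f^(q)\<close> at one fixed such point; the bound for
  \<open>f^(2q) x = f^(q) x + f^(q) (T^q x)\<close> follows because \<open>T^q x = T^j (T^q y)\<close> is again of that form.\<close>

fun list_variation :: "(real \<Rightarrow> real) \<Rightarrow> real list \<Rightarrow> real" where
  "list_variation f (a # b # xs) = \<bar>f b - f a\<bar> + list_variation f (b # xs)"
| "list_variation f _ = 0"

lemma list_variation_nonneg: "list_variation f xs \<ge> 0"
  by (induction f xs rule: list_variation.induct) auto

lemma list_variation_Cons_ge: "list_variation f (a # xs) \<ge> list_variation f xs"
  by (cases xs) (auto simp: list_variation_nonneg)

lemma list_variation_eq_sum:
  "list_variation f xs = (\<Sum>i<length xs - 1. \<bar>f (xs ! Suc i) - f (xs ! i)\<bar>)"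
proof (induction f xs rule: list_variation.induct)
  case (1 f a b xs)
  have length_eq: "length (a # b # xs) - 1 = Suc (length (b # xs) - 1)" by simp
  have "(\<Sum>i<Suc (length (b # xs) - 1). \<bar>f ((a # b # xs) ! Suc i) - f ((a # b # xs) ! i)\<bar>)
     = \<bar>f b - f a\<bar> + (\<Sum>i<length (b # xs) - 1. \<bar>f ((b # xs) ! Suc i) - f ((b # xs) ! i)\<bar>)"
    by (simp only: sum.lessThan_Suc_shift nth_Cons_Suc nth_Cons_0)
  then show ?case unfolding length_eq list_variation.simps 1[symmetric] by simp
qed auto

lemma list_variation_in_var_sums01:
  assumes "sorted_wrt (<) xs" "set xs \<subseteq> {0..<1}"
  shows "list_variation f xs \<in> var_sums01 f"
proof (cases "xs = []")
  case True
  then show ?thesis unfolding var_sums01_def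
    by (intro CollectI exI[of _ 0] exI[of _ "\<lambda>_. 0"]) auto
next
  case False
  let ?n = "length xs - 1"
  have "\<forall>i\<le>?n. xs ! i \<in> {0..<1}" using assms(2) False
    by (metis Suc_pred' length_greater_0_conv less_Suc_eq_le nth_mem subsetD)
  moreover have "\<forall>i<?n. xs ! i < xs ! Suc i" using assms(1)
    by (simp add: sorted_wrt_nth_less)
  ultimately show ?thesis unfolding var_sums01_def list_variation_eq_sum
    by (intro CollectI exI[of _ ?n] exI[of _ "\<lambda>i. xs ! i"]) auto
qed

lemma list_variation_le_Var01:
  assumes "bounded_variation01 f" "sorted_wrt (<) xs" "set xs \<subseteq> {0..<1}"
  shows "list_variation f xs \<le> Var01 f"
  using assms list_variation_in_var_sums01 unfolding Var01_def bounded_variation01_def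
  by (intro cSup_upper) auto

text \<open>The chain lists the endpoints interval by interval, in increasing order of left endpoints.\<close>
lemma sorted_chain_through_disjoint_intervals:
  fixes u v :: "nat \<Rightarrow> real"
  assumes "finite K" "\<And>k. k \<in> K \<Longrightarrow> u k \<le> v k"
    and "\<And>k l. k \<in> K \<Longrightarrow> l \<in> K \<Longrightarrow> k \<noteq> l \<Longrightarrow> {u k..v k} \<inter> {u l..v l} = {}"
  shows "\<exists>xs. sorted_wrt (<) xs \<and> set xs \<subseteq> (\<Union>k\<in>K. {u k..v k}) \<and>
             (\<Sum>k\<in>K. \<bar>f (v k) - f (u k)\<bar>) \<le> list_variation f xs"
  using assms
proof (induction "card K" arbitrary: K rule: less_induct)
  case less
  show ?case
  proof (cases "K = {}")
    case True
    then show ?thesis by (intro exI[of _ "[]"]) auto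
  next
    case False
    then have "Min (u ` K) \<in> u ` K" using less.prems(1) by simp
    then obtain k0 where k0: "k0 \<in> K" "u k0 = Min (u ` K)" by auto
    have first: "\<forall>k\<in>K. u k0 \<le> u k" using k0 less.prems(1) by simp
    let ?K = "K - {k0}"
    have "card ?K < card K" using k0 less.prems(1) by (meson card_Diff1_less)
    then obtain xs where xs: "sorted_wrt (<) xs" "set xs \<subseteq> (\<Union>k\<in>?K. {u k..v k})"
      "(\<Sum>k\<in>?K. \<bar>f (v k) - f (u k)\<bar>) \<le> list_variation f xs"
      using less.hyps[of ?K] less.prems by auto
    have beyond: "v k0 < z" if "z \<in> set xs" for z
    proof -
      obtain k where k: "k \<in> K" "k \<noteq> k0" "z \<in> {u k..v k}" using xs(2) \<open>z \<in> set xs\<close> by blast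
      have "u k \<notin> {u k0..v k0}" using less.prems(2,3) k k0(1) by fastforce
      then show "v k0 < z" using first k by auto
    qed
    have sum_K: "(\<Sum>k\<in>K. \<bar>f (v k) - f (u k)\<bar>)
        = \<bar>f (v k0) - f (u k0)\<bar> + (\<Sum>k\<in>?K. \<bar>f (v k) - f (u k)\<bar>)"
      using k0(1) less.prems(1) by (simp add: sum.remove)
    show ?thesis
    proof (cases "u k0 = v k0")
      case True
      then show ?thesis using xs sum_K by (intro exI[of _ xs]) auto
    next
      case False
      then have "u k0 < v k0" using less.prems(2) k0(1) by force
      then have "sorted_wrt (<) (u k0 # v k0 # xs)" using xs(1) beyond by (auto intro: less_trans)
      moreover have "set (u k0 # v k0 # xs) \<subseteq> (\<Union>k\<in>K. {u k..v k})"
        using xs(2) k0(1) \<open>u k0 < v k0\<close> by force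
      moreover have "(\<Sum>k\<in>K. \<bar>f (v k) - f (u k)\<bar>) \<le> list_variation f (u k0 # v k0 # xs)"
        using sum_K xs(3) list_variation_Cons_ge[where f=f and a="v k0" and xs=xs] by simp
      ultimately show ?thesis by blast
    qed
  qed
qed

lemma sum_abs_diff_le_Var01:
  fixes z w :: "nat \<Rightarrow> real" and I :: "nat \<Rightarrow> real set"
  assumes "bounded_variation01 f" "finite K"
    and "\<And>k. k \<in> K \<Longrightarrow> I k \<subseteq> {0..<1} \<and> is_interval (I k) \<and> z k \<in> I k \<and> w k \<in> I k"
    and "\<And>k l. k \<in> K \<Longrightarrow> l \<in> K \<Longrightarrow> k \<noteq> l \<Longrightarrow> I k \<inter> I l = {}"
  shows "(\<Sum>k\<in>K. \<bar>f (z k) - f (w k)\<bar>) \<le> Var01 f"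
proof -
  define u where "u k = min (z k) (w k)" for k
  define v where "v k = max (z k) (w k)" for k
  have segment_in_I: "{u k..v k} \<subseteq> I k" if "k \<in> K" for k
  proof
    fix t assume t: "t \<in> {u k..v k}"
    have "is_interval (I k)" "u k \<in> I k" "v k \<in> I k"
      using assms(3) that unfolding u_def v_def min_def max_def by auto
    with t show "t \<in> I k" using mem_is_interval_1_I[of "I k" "u k" "v k" t] by auto
  qed
  have "{u k..v k} \<inter> {u l..v l} = {}" if "k \<in> K" "l \<in> K" "k \<noteq> l" for k l
    using assms(4)[OF that] segment_in_I[OF that(1)] segment_in_I[OF that(2)] by blast
  moreover have "u k \<le> v k" for k unfolding u_def v_def by simp
  ultimately obtain xs where xs: "sorted_wrt (<) xs" "set xs \<subseteq> (\<Union>k\<in>K. {u k..v k})"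
      "(\<Sum>k\<in>K. \<bar>f (v k) - f (u k)\<bar>) \<le> list_variation f xs"
    using sorted_chain_through_disjoint_intervals[OF assms(2), of u v f] by blast
  have "set xs \<subseteq> {0..<1}"
  proof
    fix t assume "t \<in> set xs"
    then obtain k where "k \<in> K" "t \<in> {u k..v k}" using xs(2) by blast
    then show "t \<in> {0..<1}" using segment_in_I assms(3) by blast
  qed
  then have "list_variation f xs \<le> Var01 f"
    using list_variation_le_Var01[OF assms(1) xs(1)] by blast
  moreover have "(\<Sum>k\<in>K. \<bar>f (z k) - f (w k)\<bar>) = (\<Sum>k\<in>K. \<bar>f (v k) - f (u k)\<bar>)"
    unfolding u_def v_def by (intro sum.cong refl) (simp add: min_def max_def abs_minus_commute)
  ultimately show ?thesis using xs(3) by simp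
qed

lemma sum_lessThan_rotate:
  fixes g :: "nat \<Rightarrow> 'a::comm_monoid_add"
  assumes "j \<le> q"
  shows "(\<Sum>i<q. g (i + j)) = (\<Sum>k<q. if j \<le> k then g k else g (k + q))"
proof -
  have "(\<Sum>i<q. g (i + j)) = sum g {j..<q} + sum g {q..<q + j}"
    using sum.shift_bounds_nat_ivl[of g 0 j q] sum.atLeastLessThan_concat[of j q "q + j" g] assms
    by (simp add: atLeast0LessThan add.commute)
  also have "sum g {q..<q + j} = (\<Sum>k<j. g (k + q))"
    using sum.shift_bounds_nat_ivl[of g 0 q j] by (simp add: atLeast0LessThan add.commute)
  also have "sum g {j..<q} + (\<Sum>k<j. g (k + q)) = (\<Sum>k<q. if j \<le> k then g k else g (k + q))"
    using sum.atLeastLessThan_concat[of 0 j q "\<lambda>k. if j \<le> k then g k else g (k + q)"] assms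
    by (simp add: atLeast0LessThan add.commute)
  finally show ?thesis .
qed

lemma birkhoff_sum_add:
  "birkhoff_sum T f (m + n) x = birkhoff_sum T f m x + birkhoff_sum T f n ((T ^^ m) x)"
  unfolding birkhoff_sum_def by (induction n) (simp_all add: funpow_add add.commute)

lemma birkhoff_sum_double_deviation:
  assumes "\<bar>birkhoff_sum T f n x - a\<bar> \<le> V" "\<bar>birkhoff_sum T f n ((T ^^ n) x) - a\<bar> \<le> V"
  shows "\<bar>birkhoff_sum T f (2*n) x - 2*a\<bar> \<le> 2*V"
proof -
  have "birkhoff_sum T f (2*n) x - 2*a
      = (birkhoff_sum T f n x - a) + (birkhoff_sum T f n ((T ^^ n) x) - a)"
    unfolding mult_2 birkhoff_sum_add by simp
  then show ?thesis
    using assms abs_triangle_ineq[of "birkhoff_sum T f n x - a" "birkhoff_sum T f n ((T ^^ n) x) - a"]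
    by linarith
qed

text \<open>Levels \<open>k \<ge> j\<close> are visited by the orbit of \<open>y\<close>, levels \<open>k < j\<close> by the orbit of \<open>T\<^sup>q y\<close>.\<close>
lemma birkhoff_sum_visits_levels:
  assumes "y \<in> D" "(T ^^ q) y \<in> D" "j < q"
  shows "\<exists>z. (\<forall>k<q. z k \<in> (T ^^ k) ` D) \<and> birkhoff_sum T f q ((T ^^ j) y) = (\<Sum>k<q. f (z k))"
proof (intro exI conjI allI impI)
  define z where "z k = (if j \<le> k then (T ^^ k) y else (T ^^ (k + q)) y)" for k
  show "z k \<in> (T ^^ k) ` D" for k
    using assms unfolding z_def by (auto simp: funpow_add)
  have "birkhoff_sum T f q ((T ^^ j) y) = (\<Sum>i<q. f ((T ^^ (i + j)) y))"
    unfolding birkhoff_sum_def by (simp add: funpow_add)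
  also have "\<dots> = (\<Sum>k<q. f (z k))"
    using sum_lessThan_rotate[of j q "\<lambda>i. f ((T ^^ i) y)"] assms(3)
    unfolding z_def by (simp add: if_distrib)
  finally show "birkhoff_sum T f q ((T ^^ j) y) = (\<Sum>k<q. f (z k))" .
qed

lemma funpow_maps_into:
  assumes "T ` A \<subseteq> A" "x \<in> A"
  shows "(T ^^ k) x \<in> A"
  using assms by (induction k) auto

lemma birkhoff_sum_tower_oscillation:
  assumes "T ` {0..<1} \<subseteq> {0..<1}" "bounded_variation01 f" "rokhlin_tower T D q"
    and "y \<in> D" "(T ^^ q) y \<in> D" "j < q"
    and "y' \<in> D" "(T ^^ q) y' \<in> D" "j' < q"
  shows "\<bar>birkhoff_sum T f q ((T ^^ j) y) - birkhoff_sum T f q ((T ^^ j') y')\<bar> \<le> Var01 f"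
proof -
  obtain z where z: "\<forall>k<q. z k \<in> (T ^^ k) ` D"
    and sum_z: "birkhoff_sum T f q ((T ^^ j) y) = (\<Sum>k<q. f (z k))"
    using birkhoff_sum_visits_levels[OF assms(4-6)] by blast
  obtain w where w: "\<forall>k<q. w k \<in> (T ^^ k) ` D"
    and sum_w: "birkhoff_sum T f q ((T ^^ j') y') = (\<Sum>k<q. f (w k))"
    using birkhoff_sum_visits_levels[OF assms(7-9)] by blast
  have levels_in_01: "(T ^^ k) ` D \<subseteq> {0..<1}" for k
    using assms(3) funpow_maps_into[OF assms(1)] unfolding rokhlin_tower_def by blast
  have "\<bar>birkhoff_sum T f q ((T ^^ j) y) - birkhoff_sum T f q ((T ^^ j') y')\<bar>
      \<le> (\<Sum>k<q. \<bar>f (z k) - f (w k)\<bar>)"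
    unfolding sum_z sum_w sum_subtractf[symmetric] by (rule sum_abs)
  also have "\<dots> \<le> Var01 f"
  proof (rule sum_abs_diff_le_Var01[where I = "\<lambda>k. (T ^^ k) ` D", OF assms(2) finite_lessThan])
    fix k assume "k \<in> {..<q}"
    then show "(T ^^ k) ` D \<subseteq> {0..<1} \<and> is_interval ((T ^^ k) ` D) \<and>
        z k \<in> (T ^^ k) ` D \<and> w k \<in> (T ^^ k) ` D"
      using assms(3) z w levels_in_01 unfolding rokhlin_tower_def by blast
  next
    fix k l assume "k \<in> {..<q}" "l \<in> {..<q}" "k \<noteq> l"
    then show "(T ^^ k) ` D \<inter> (T ^^ l) ` D = {}"
      using assms(3) unfolding rokhlin_tower_def by blast
  qed
  finally show ?thesis .
qed

theorem lemma6p2: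
  fixes T f :: "real \<Rightarrow> real" and D :: "real set" and q :: nat
  assumes "iet T"
    and "bounded_variation01 f"
    and "rokhlin_tower T D q"
  shows "\<exists>a::real. \<forall>x \<in> (\<Union>i<q. (T ^^ i) ` (D \<inter> iet_preimage T q D \<inter> iet_preimage T (2*q) D)).
           \<bar>birkhoff_sum T f q x - a\<bar> \<le> Var01 f \<and>
           \<bar>birkhoff_sum T f (2*q) x - 2*a\<bar> \<le> 2 * Var01 f"
proof -
  have into: "T ` {0..<1} \<subseteq> {0..<1}"
    using assms(1) unfolding iet_def bij_betw_def by blast
  note oscillation = birkhoff_sum_tower_oscillation[OF into assms(2,3)]
  let ?S = "D \<inter> iet_preimage T q D \<inter> iet_preimage T (2*q) D"
  have returns: "y \<in> D" "(T ^^ q) y \<in> D" "(T ^^ q) ((T ^^ q) y) \<in> D" if "y \<in> ?S" for y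
    using that unfolding iet_preimage_def by (auto simp: funpow_add mult_2)
  show ?thesis
  proof (cases "\<exists>j0<q. \<exists>y0. y0 \<in> ?S")
    case False
    then show ?thesis by blast
  next
    case True
    then obtain j0 y0 where j0: "j0 < q" and y0: "y0 \<in> ?S" by blast
    show ?thesis
    proof (intro exI[of _ "birkhoff_sum T f q ((T ^^ j0) y0)"] ballI)
      fix x assume "x \<in> (\<Union>i<q. (T ^^ i) ` ?S)"
      then obtain j y where j: "j < q" and y: "y \<in> ?S" and x: "x = (T ^^ j) y" by blast
      have x_shift: "(T ^^ q) x = (T ^^ j) ((T ^^ q) y)"
        unfolding x by (metis funpow_add add.commute comp_apply)
      have "\<bar>birkhoff_sum T f q x - birkhoff_sum T f q ((T ^^ j0) y0)\<bar> \<le> Var01 f"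
        unfolding x using oscillation[OF returns(1,2)[OF y] j returns(1,2)[OF y0] j0] .
      moreover have "\<bar>birkhoff_sum T f q ((T ^^ q) x) - birkhoff_sum T f q ((T ^^ j0) y0)\<bar> \<le> Var01 f"
        unfolding x_shift using oscillation[OF returns(2,3)[OF y] j returns(1,2)[OF y0] j0] .
      ultimately show "\<bar>birkhoff_sum T f q x - birkhoff_sum T f q ((T ^^ j0) y0)\<bar> \<le> Var01 f \<and>
          \<bar>birkhoff_sum T f (2*q) x - 2 * birkhoff_sum T f q ((T ^^ j0) y0)\<bar> \<le> 2 * Var01 f"
        using birkhoff_sum_double_deviation by blast
    qed
  qed
qed

end
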